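(* Let $n\ge6$ and $C=(v_0,v_{n-2},v_2)$. Then $|H_n^{(3)}(C)|=\min_{C'}|H_n^{(3)}(C')|$, where $C'$ ranges over all $3$-valid tuples of length $3$ in $\Omega_n$.
   Context: $\Omega_n=\{v_0,\dots,v_{n-1}\}$ with cyclic order $v_0<\dots<v_{n-1}<v_0$, indices mod $n$. For distinct vertices $u,w$, $(u,w)$ is the set of vertices strictly between $u$ and $w$ moving clockwise from $u$ to $w$, and $[u,w]=(u,w)\cup\{u,w\}$. A tuple $(w_1,w_2,w_3)$ of distinct vertices is semi-valid if $w_1<w_3<w_2<w_1$ in clockwise cyclic order, and $3$-valid if moreover $|[w_i,w_{i-1}]|\ge3$ for $i=1,2,3$ (indices mod 3). $H_n^{(3)}(C)=\{e\in\binom{\Omega_n}{3}: e\cap[w_i,w_{i-1}]\neq\emptyset\ \text{for } i=1,2,3\}$. *)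

theory Defs
  imports Main
begin

text \<open>Vertices of Omega_n are represented by their indices 0..<n; clockwise
  means increasing index modulo n.\<close>

definition Omega :: "nat \<Rightarrow> nat set" where
  "Omega n = {0..<n}"

definition cyc_open :: "nat \<Rightarrow> nat \<Rightarrow> nat \<Rightarrow> nat set" where
  "cyc_open n u w = {(u + k) mod n | k. 0 < k \<and> k < (w + n - u) mod n}"

definition cyc_closed :: "nat \<Rightarrow> nat \<Rightarrow> nat \<Rightarrow> nat set" where
  "cyc_closed n u w = cyc_open n u w \<union> {u, w}"

definition semi_valid :: "nat \<Rightarrow> nat \<times> nat \<times> nat \<Rightarrow> bool" where
  "semi_valid n C = (case C of (w1, w2, w3) \<Rightarrow>
     w1 \<in> Omega n \<and> w2 \<in> Omega n \<and> w3 \<in> Omega n \<and>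
     w1 \<noteq> w2 \<and> w2 \<noteq> w3 \<and> w1 \<noteq> w3 \<and> w3 \<in> cyc_open n w1 w2)"

definition valid3 :: "nat \<Rightarrow> nat \<times> nat \<times> nat \<Rightarrow> bool" where
  "valid3 n C = (case C of (w1, w2, w3) \<Rightarrow>
     semi_valid n C \<and>
     card (cyc_closed n w1 w3) \<ge> 3 \<and>
     card (cyc_closed n w2 w1) \<ge> 3 \<and>
     card (cyc_closed n w3 w2) \<ge> 3)"

definition H3 :: "nat \<Rightarrow> nat \<times> nat \<times> nat \<Rightarrow> nat set set" where
  "H3 n C = (case C of (w1, w2, w3) \<Rightarrow>
     {e. e \<subseteq> Omega n \<and> card e = 3 \<and>
         e \<inter> cyc_closed n w1 w3 \<noteq> {} \<and>
         e \<inter> cyc_closed n w2 w1 \<noteq> {} \<and>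
         e \<inter> cyc_closed n w3 w2 \<noteq> {}})"

end

theory Submission
  imports Defs
begin

text \<open>Rotations of the cycle preserve the number of hyperedges, so every 3-valid tuple can be
  moved to the form (v_0, v_p, v_q). Writing q = x + 2, p = x + y + 4 and n = x + y + z + 6, where
  x, y, z \<ge> 0 measure how much the three arcs exceed their minimal length, inclusion-exclusion
  over the arcs a triple misses expresses the number of hyperedges as a cubic polynomial
  F(x, y, z) in binomial coefficients. Its excess over F(0, x + y + z, 0), the value for the tuple
  (v_0, v_(n-2), v_2), is 2 (xy + yz + zx) + xyz \<ge> 0.\<close>

definition cdist :: "nat \<Rightarrow> nat \<Rightarrow> nat \<Rightarrow> nat" where
  "cdist n u w = (w + n - u) mod n"

lemma int_cdist:
  assumes "u < n" "w < n"
  shows "int (cdist n u w) = (int w - int u) mod int n"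
proof -
  have "int (w + n - u) = (int w - int u) + int n" using assms by simp
  then show ?thesis unfolding cdist_def by (simp add: of_nat_mod)
qed

lemma cdist_eq_iff:
  assumes "u < n" "w < n" "k < n"
  shows "cdist n u w = k \<longleftrightarrow> (u + k) mod n = w"
proof -
  have "cdist n u w = k \<longleftrightarrow> (int w - int u) mod int n = int k mod int n"
    using int_cdist[OF assms(1,2)] assms(3) by auto
  also have "\<dots> \<longleftrightarrow> int w mod int n = (int u + int k) mod int n"
    by (simp add: mod_eq_dvd_iff algebra_simps)
  also have "\<dots> \<longleftrightarrow> int w = int ((u + k) mod n)"
    using assms(2) by (simp add: of_nat_mod)
  also have "\<dots> \<longleftrightarrow> (u + k) mod n = w" by auto
  finally show ?thesis .
qed

lemma cdist_less: "0 < n \<Longrightarrow> cdist n u w < n"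
  unfolding cdist_def by simp

lemma add_cdist_mod: "u < n \<Longrightarrow> w < n \<Longrightarrow> (u + cdist n u w) mod n = w"
  by (metis cdist_eq_iff cdist_less gr_zeroI less_zeroE)

lemma cdist_add_mod: "u < n \<Longrightarrow> k < n \<Longrightarrow> cdist n u ((u + k) mod n) = k"
  by (simp add: cdist_eq_iff)

lemma cdist_eq_0_iff: "u < n \<Longrightarrow> w < n \<Longrightarrow> cdist n u w = 0 \<longleftrightarrow> u = w"
  using cdist_eq_iff[of u n w 0] by auto

lemma cdist_rotate:
  assumes "u < n" "w < n"
  shows "cdist n ((u + t) mod n) ((w + t) mod n) = cdist n u w"
proof -
  have "((u + t) mod n + cdist n u w) mod n = ((u + cdist n u w) mod n + t) mod n"
    unfolding mod_add_left_eq by (simp only: ac_simps)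
  also have "\<dots> = (w + t) mod n" using add_cdist_mod[OF assms] by simp
  finally show ?thesis using assms cdist_less[of n u w] by (simp add: cdist_eq_iff)
qed

lemma cdist_swap:
  assumes "u < n" "w < n" "u \<noteq> w"
  shows "cdist n w u = n - cdist n u w"
proof -
  define d where "d = cdist n u w"
  have "0 < d" "d < n" using assms cdist_eq_0_iff cdist_less unfolding d_def by auto
  have "(w + (n - d)) mod n = ((u + d) mod n + (n - d)) mod n"
    using add_cdist_mod[OF assms(1,2)] by (simp add: d_def)
  also have "\<dots> = (u + d + (n - d)) mod n" by (rule mod_add_left_eq)
  also have "\<dots> = (u + n) mod n" using \<open>d < n\<close> by simp
  also have "\<dots> = u" using assms by simp
  finally show ?thesis
    using cdist_eq_iff[OF assms(2,1), of "n - d"] \<open>0 < d\<close> \<open>d < n\<close> by (simp add: d_def)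
qed

lemma cdist_split:
  assumes "u < n" "v < n" "w < n" "cdist n u v \<le> cdist n u w"
  shows "cdist n v w = cdist n u w - cdist n u v"
proof -
  have "(v + (cdist n u w - cdist n u v)) mod n = ((u + cdist n u v) mod n + (cdist n u w - cdist n u v)) mod n"
    using add_cdist_mod[OF assms(1,2)] by simp
  also have "\<dots> = (u + cdist n u v + (cdist n u w - cdist n u v)) mod n"
    by (rule mod_add_left_eq)
  also have "\<dots> = (u + cdist n u w) mod n" using assms(4) by simp
  also have "\<dots> = w" using add_cdist_mod[OF assms(1,3)] .
  finally show ?thesis using cdist_eq_iff[OF assms(2,3)] cdist_less[of n u w] assms by simp
qed

lemma cyc_closed_eq_image:
  assumes "u < n" "w < n"
  shows "cyc_closed n u w = (\<lambda>k. (u + k) mod n) ` {0..cdist n u w}"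
proof -
  have "{0..cdist n u w} = insert 0 (insert (cdist n u w) {0<..<cdist n u w})" by auto
  then show ?thesis
    using assms add_cdist_mod[OF assms]
    unfolding cyc_closed_def cyc_open_def cdist_def[symmetric] by auto
qed

lemma inj_on_rotate: "inj_on (\<lambda>k. (u + k) mod n) {..<n::nat}"
proof (rule inj_onI)
  fix a b assume "a \<in> {..<n}" "b \<in> {..<n}" and eq: "(u + a) mod n = (u + b) mod n"
  then have u: "u mod n < n" by simp
  have "a = cdist n (u mod n) ((u mod n + a) mod n)" using \<open>a \<in> {..<n}\<close> by (simp add: cdist_add_mod[OF u])
  also have "\<dots> = cdist n (u mod n) ((u mod n + b) mod n)" using eq by (simp add: mod_add_left_eq)
  also have "\<dots> = b" using \<open>b \<in> {..<n}\<close> by (simp add: cdist_add_mod[OF u])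
  finally show "a = b" .
qed

lemma card_cyc_closed:
  assumes "u < n" "w < n"
  shows "card (cyc_closed n u w) = cdist n u w + 1"
proof -
  have "{0..cdist n u w} \<subseteq> {..<n}" using cdist_less[of n u w] assms by auto
  then have "inj_on (\<lambda>k. (u + k) mod n) {0..cdist n u w}"
    by (rule inj_on_subset[OF inj_on_rotate])
  then show ?thesis by (simp add: cyc_closed_eq_image[OF assms] card_image)
qed

lemma rotate_cyc_closed:
  assumes "u < n" "w < n"
  shows "(\<lambda>x. (x + t) mod n) ` cyc_closed n u w = cyc_closed n ((u + t) mod n) ((w + t) mod n)"
proof -
  have "((u + k) mod n + t) mod n = ((u + t) mod n + k) mod n" for k
    unfolding mod_add_left_eq by (simp only: ac_simps)
  then show ?thesis
    using assms by (simp add: cyc_closed_eq_image cdist_rotate image_image)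
qed

lemma cyc_closed_ordered:
  assumes "u \<le> w" "w < n"
  shows "cyc_closed n u w = {u..w}"
proof -
  have "cdist n u w = w - u" using assms by (simp add: cdist_eq_iff)
  moreover have "(\<lambda>k. (u + k) mod n) ` {0..w - u} = {u..w}"
  proof -
    have "(\<lambda>k. (u + k) mod n) ` {0..w - u} = (\<lambda>k. u + k) ` {0..w - u}"
      using assms by (intro image_cong) auto
    also have "\<dots> = {u..w}" using assms(1) by (simp add: image_add_atLeastAtMost)
    finally show ?thesis .
  qed
  ultimately show ?thesis using assms by (simp add: cyc_closed_eq_image)
qed

lemma cyc_closed_to_0:
  assumes "0 < u" "u < n"
  shows "cyc_closed n u 0 = insert 0 {u..<n}"
proof -
  have "cdist n u 0 = n - u" using assms by (simp add: cdist_eq_iff)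
  moreover have "(\<lambda>k. (u + k) mod n) ` {0..n - u} = insert 0 {u..<n}"
  proof -
    have "{0..n - u} = insert (n - u) {0..<n - u}" by auto
    moreover have "(\<lambda>k. (u + k) mod n) ` {0..<n - u} = (\<lambda>k. u + k) ` {0..<n - u}"
      by (intro image_cong) auto
    ultimately show ?thesis using assms by (simp add: image_add_atLeastLessThan)
  qed
  ultimately show ?thesis using assms by (simp add: cyc_closed_eq_image)
qed

definition triples :: "'a set \<Rightarrow> 'a set set" where
  "triples X = {e. e \<subseteq> X \<and> card e = 3}"

lemma card_triples: "finite X \<Longrightarrow> card (triples X) = card X choose 3"
  unfolding triples_def by (rule n_subsets)

lemma finite_triples: "finite X \<Longrightarrow> finite (triples X)"
  unfolding triples_def by (rule finite_subset[of _ "Pow X"]) auto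

lemma triples_Int: "triples X \<inter> triples Y = triples (X \<inter> Y)"
  unfolding triples_def by auto

lemma int_card_Un3:
  assumes "finite A" "finite B" "finite C"
  shows "int (card (A \<union> B \<union> C)) = int (card A) + int (card B) + int (card C)
     - int (card (A \<inter> B)) - int (card (A \<inter> C)) - int (card (B \<inter> C)) + int (card (A \<inter> B \<inter> C))"
proof -
  have "card A + card B = card (A \<union> B) + card (A \<inter> B)"
    using assms by (intro card_Un_Int) auto
  moreover have "card (A \<union> B) + card C = card (A \<union> B \<union> C) + card ((A \<inter> C) \<union> (B \<inter> C))"
    using assms by (subst card_Un_Int) (auto simp: Int_Un_distrib2)
  moreover have "card (A \<inter> C) + card (B \<inter> C) = card ((A \<inter> C) \<union> (B \<inter> C)) + card (A \<inter> B \<inter> C)"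
    using assms by (subst card_Un_Int) (auto simp: Int_ac)
  ultimately show ?thesis by linarith
qed

lemma card_triples_meeting:
  assumes "finite V"
  shows "int (card {e. e \<subseteq> V \<and> card e = 3 \<and> e \<inter> A \<noteq> {} \<and> e \<inter> B \<noteq> {} \<and> e \<inter> C \<noteq> {}})
    = int (card V choose 3)
      - int (card (V - A) choose 3) - int (card (V - B) choose 3) - int (card (V - C) choose 3)
      + int (card (V - (A \<union> B)) choose 3) + int (card (V - (A \<union> C)) choose 3)
      + int (card (V - (B \<union> C)) choose 3) - int (card (V - (A \<union> B \<union> C)) choose 3)"
proof -
  let ?missing = "triples (V - A) \<union> triples (V - B) \<union> triples (V - C)"
  have "{e. e \<subseteq> V \<and> card e = 3 \<and> e \<inter> A \<noteq> {} \<and> e \<inter> B \<noteq> {} \<and> e \<inter> C \<noteq> {}}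
      = triples V - ?missing"
    unfolding triples_def by blast
  moreover have "?missing \<subseteq> triples V" unfolding triples_def by blast
  moreover have "finite ?missing" using assms by (simp add: finite_triples)
  ultimately have "int (card {e. e \<subseteq> V \<and> card e = 3 \<and> e \<inter> A \<noteq> {} \<and> e \<inter> B \<noteq> {} \<and> e \<inter> C \<noteq> {}})
      = int (card (triples V)) - int (card ?missing)"
    using card_mono[OF finite_triples[OF assms]] by (simp add: card_Diff_subset of_nat_diff)
  also have "int (card ?missing)
      = int (card (triples (V - A))) + int (card (triples (V - B))) + int (card (triples (V - C)))
      - int (card (triples (V - (A \<union> B)))) - int (card (triples (V - (A \<union> C))))
      - int (card (triples (V - (B \<union> C)))) + int (card (triples (V - (A \<union> B \<union> C))))"
    using assms by (simp add: int_card_Un3 finite_triples triples_Int Diff_Int_distrib2 Diff_Un Int_ac)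
  finally show ?thesis using assms by (simp add: card_triples)
qed

lemma six_choose_three: "6 * int (m choose 3) = int m * (int m - 1) * (int m - 2)"
proof (induction m)
  case (Suc m)
  have "Suc m choose 3 = (m choose 2) + (m choose 3)"
    by (simp add: numeral_3_eq_3 numeral_2_eq_2)
  moreover have "2 * int (m choose 2) = int m * (int m - 1)"
    by (induction m) (auto simp: numeral_2_eq_2 algebra_simps)
  ultimately show ?case using Suc by (simp add: algebra_simps)
qed simp

text \<open>The number of hyperedges for the tuple (v_0, v_(x+y+4), v_(x+2)) in \<Omega>_(x+y+z+6); the
  arcs [v_0, v_(x+2)], [v_(x+2), v_(x+y+4)] and [v_(x+y+4), v_0] have x + 3, y + 3 and z + 3
  vertices.\<close>
definition hyperedge_count :: "nat \<Rightarrow> nat \<Rightarrow> nat \<Rightarrow> int" where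
  "hyperedge_count x y z =
     int ((x+y+z+6) choose 3) - int ((y+z+3) choose 3) - int ((x+z+3) choose 3)
     - int ((x+y+3) choose 3) + int ((x+1) choose 3) + int ((y+1) choose 3) + int ((z+1) choose 3)"

lemma card_H3_standard:
  "int (card (H3 (x+y+z+6) (0, x+y+4, x+2))) = hyperedge_count x y z"
proof -
  define n p q where "n = x+y+z+6" and "p = x+y+4" and "q = x+2"
  let ?V = "{0..<n}" and ?A = "{0..q}" and ?B = "insert 0 {p..<n}" and ?C = "{q..p}"
  have "H3 n (0, p, q) = {e. e \<subseteq> ?V \<and> card e = 3 \<and> e \<inter> ?A \<noteq> {} \<and> e \<inter> ?B \<noteq> {} \<and> e \<inter> ?C \<noteq> {}}"
    unfolding H3_def Omega_def n_def p_def q_def by (simp add: cyc_closed_ordered cyc_closed_to_0)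
  moreover have "?V - ?A = {q<..<n}" "?V - ?B = {0<..<p}" "?V - ?C = {0..<q} \<union> {p<..<n}"
    "?V - (?A \<union> ?B) = {q<..<p}" "?V - (?A \<union> ?C) = {p<..<n}" "?V - (?B \<union> ?C) = {0<..<q}"
    "?V - (?A \<union> ?B \<union> ?C) = {}"
    unfolding n_def p_def q_def by auto
  moreover have "card ({0..<q} \<union> {p<..<n}) = x+z+3"
    unfolding n_def p_def q_def by (subst card_Un_disjoint) auto
  moreover have "card ?V = x+y+z+6" "card {q<..<n} = y+z+3" "card {0<..<p} = x+y+3"
    "card {q<..<p} = y+1" "card {p<..<n} = z+1" "card {0<..<q} = x+1"
    unfolding n_def p_def q_def by simp_all
  ultimately show ?thesis
    using card_triples_meeting[of ?V ?A ?B ?C]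
    unfolding hyperedge_count_def by (simp only: n_def p_def q_def) simp
qed

lemma hyperedge_count_excess:
  "6 * (hyperedge_count x y z - hyperedge_count 0 (x+y+z) 0)
     = 12 * (int x * int y + int y * int z + int z * int x) + 6 * int x * int y * int z"
  unfolding hyperedge_count_def right_diff_distrib distrib_left
  by (simp only: six_choose_three) (simp add: algebra_simps)

lemma hyperedge_count_min: "hyperedge_count 0 (x+y+z) 0 \<le> hyperedge_count x y z"
proof -
  have "0 \<le> 12 * (int x * int y + int y * int z + int z * int x) + 6 * int x * int y * int z"
    by simp
  then show ?thesis unfolding hyperedge_count_excess[symmetric] by simp
qed

lemma card_H3_le_rotate:
  assumes "u1 < n" "u2 < n" "u3 < n"
  shows "card (H3 n (u1, u2, u3)) \<le> card (H3 n ((u1 + t) mod n, (u2 + t) mod n, (u3 + t) mod n))"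
proof -
  define f where "f x = (x + t) mod n" for x
  have "inj_on f (Omega n)"
    using inj_on_rotate[of t n] unfolding f_def Omega_def
    by (simp add: add.commute lessThan_atLeast0)
  then have "inj_on (image f) (H3 n (u1, u2, u3))"
    by (rule inj_on_subset[OF inj_on_image_Pow]) (auto simp: H3_def)
  moreover have "image f ` H3 n (u1, u2, u3) \<subseteq> H3 n (f u1, f u2, f u3)"
  proof
    fix e' assume "e' \<in> image f ` H3 n (u1, u2, u3)"
    then obtain e where e: "e' = f ` e" "e \<subseteq> Omega n" "card e = 3"
      "e \<inter> cyc_closed n u1 u3 \<noteq> {}" "e \<inter> cyc_closed n u2 u1 \<noteq> {}" "e \<inter> cyc_closed n u3 u2 \<noteq> {}"
      unfolding H3_def by auto
    have meets: "f ` e \<inter> cyc_closed n (f u) (f w) \<noteq> {}"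
      if "e \<inter> cyc_closed n u w \<noteq> {}" "u < n" "w < n" for u w
      using that rotate_cyc_closed[of u n w t] unfolding f_def by blast
    have "card (f ` e) = 3" using e(2,3) \<open>inj_on f (Omega n)\<close> by (simp add: card_image inj_on_subset)
    moreover have "f ` e \<subseteq> Omega n" using e(2) unfolding f_def Omega_def by auto
    ultimately show "e' \<in> H3 n (f u1, f u2, f u3)"
      using e meets assms unfolding H3_def by auto
  qed
  moreover have "finite (H3 n (f u1, f u2, f u3))"
    by (rule finite_subset[of _ "Pow (Omega n)"]) (auto simp: H3_def Omega_def)
  ultimately show ?thesis unfolding f_def by (rule card_inj_on_le)
qed

lemma valid3_reduce_standard:
  assumes "valid3 n (w1, w2, w3)"
  obtains x y z where "n = x+y+z+6" "card (H3 n (0, x+y+4, x+2)) \<le> card (H3 n (w1, w2, w3))"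
proof -
  have w: "w1 < n" "w2 < n" "w3 < n" "w1 \<noteq> w2" "w3 \<in> cyc_open n w1 w2"
    and arcs: "3 \<le> card (cyc_closed n w1 w3)" "3 \<le> card (cyc_closed n w2 w1)"
      "3 \<le> card (cyc_closed n w3 w2)"
    using assms unfolding valid3_def semi_valid_def Omega_def by auto
  define p q where "p = cdist n w1 w2" and "q = cdist n w1 w3"
  obtain k where k: "0 < k" "k < p" "w3 = (w1 + k) mod n"
    using w(5) unfolding cyc_open_def cdist_def[symmetric] p_def by auto
  have "q = k" using k w(1) cdist_less[of n w1 w2] unfolding q_def p_def by (simp add: cdist_add_mod)
  have q2: "2 \<le> q" using arcs(1) w by (simp add: card_cyc_closed q_def)
  have "cdist n w3 w2 = p - q"
    using cdist_split[of w1 n w3 w2] w k \<open>q = k\<close> unfolding p_def q_def by simp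
  with arcs(3) have qp: "q + 2 \<le> p" using card_cyc_closed[OF w(3) w(2)] by simp
  have "cdist n w2 w1 = n - p" using cdist_swap[OF w(1,2,4)] by (simp add: p_def)
  with arcs(2) have pn: "p + 2 \<le> n" using card_cyc_closed[OF w(2) w(1)] by simp
  have "((0 + w1) mod n, (p + w1) mod n, (q + w1) mod n) = (w1, w2, w3)"
    using w by (simp add: p_def q_def add.commute add_cdist_mod)
  then have "card (H3 n (0, p, q)) \<le> card (H3 n (w1, w2, w3))"
    using card_H3_le_rotate[of 0 n p q w1] qp pn by simp
  moreover have "n = (q - 2) + (p - q - 2) + (n - p - 2) + 6" "p = (q - 2) + (p - q - 2) + 4"
    "q = (q - 2) + 2"
    using q2 qp pn by simp_all
  ultimately show thesis using that by metis
qed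

lemma valid3_standard:
  assumes "6 \<le> n"
  shows "valid3 n (0, n - 2, 2)"
proof -
  have "Suc (Suc (n - 2)) = n" using assms by simp
  then have "cdist n 0 (n - 2) = n - 2" "cdist n 0 2 = 2" "cdist n (n - 2) 0 = 2" "cdist n 2 (n - 2) = n - 4"
    using assms by (simp_all add: cdist_eq_iff)
  moreover have "2 \<in> cyc_open n 0 (n - 2)"
    using \<open>cdist n 0 (n - 2) = n - 2\<close> assms unfolding cyc_open_def cdist_def[symmetric] by (auto intro!: exI[of _ 2])
  ultimately show ?thesis
    using assms by (auto simp: valid3_def semi_valid_def Omega_def card_cyc_closed)
qed

theorem lemma3p12:
  fixes n :: nat
  assumes "n \<ge> 6"
  shows "card (H3 n (0, n - 2, 2)) = Min {card (H3 n C') | C'. valid3 n C'}"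
proof (rule Min_eqI[symmetric])
  have "{card (H3 n C') | C'. valid3 n C'} \<subseteq> (\<lambda>C. card (H3 n C)) ` (Omega n \<times> Omega n \<times> Omega n)"
    unfolding valid3_def semi_valid_def by (auto split: prod.splits)
  then show "finite {card (H3 n C') | C'. valid3 n C'}"
    by (rule finite_subset) (simp add: Omega_def)
  show "card (H3 n (0, n - 2, 2)) \<in> {card (H3 n C') | C'. valid3 n C'}"
    using valid3_standard[OF assms] by auto
  fix m assume "m \<in> {card (H3 n C') | C'. valid3 n C'}"
  then obtain w1 w2 w3 where "m = card (H3 n (w1, w2, w3))" and "valid3 n (w1, w2, w3)" by auto
  then obtain x y z where n: "n = x+y+z+6" and le: "card (H3 n (0, x+y+4, x+2)) \<le> m"
    by (auto elim: valid3_reduce_standard)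
  have "n - 2 = 0 + (x+y+z) + 4" using n by simp
  then have "int (card (H3 n (0, n - 2, 2))) = hyperedge_count 0 (x+y+z) 0"
    using card_H3_standard[of 0 "x+y+z" 0] n by (simp only: add_0 add_0_right)
  also have "\<dots> \<le> hyperedge_count x y z" by (rule hyperedge_count_min)
  also have "\<dots> = int (card (H3 n (0, x+y+4, x+2)))" unfolding n by (rule card_H3_standard[symmetric])
  finally show "card (H3 n (0, n - 2, 2)) \<le> m" using le by linarith
qed

end
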